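(* Let the channel gains form an $m$-dependent frequency-selective channel with $K=N$, and assume each $|h_{n,n,k}|$ has a continuous distribution. Let $\varepsilon>0$ and let the M-FSIG parameter be an integer $M=M_N$ with $M\ge(e+\varepsilon)(m+1)\ln N$ and $M/N\to0$. For a profile $\mathbf a$ let $N_c(\mathbf a)$ be its number of sharing users. Then $\max_{\mathbf a^*\in\mathcal P_e}N_c(\mathbf a^* )/N\to0$ in probability as $N\to\infty$ (with the convention that the maximum over an empty set is $0$); in particular, for any PNE $\mathbf a^*$, $N_c(\mathbf a^* )/N\to0$ in probability.
   Context: $N$ users, $K=N$ REs, complex channel gains $h_{n_1,n_2,k}$. Given an integer $m\ge0$ not depending on $N$, they form an $m$-dependent frequency-selective channel if: (i) for each pair $(n_1,n_2)$, $h_{n_1,n_2,1},\dots,h_{n_1,n_2,K}$ are identically distributed and $\Pr(|h_{n_1,n_2,k}|=0)=0$; (ii) the vectors $(h_{n_1,n_2,k})_{k=1}^K$ for distinct pairs are mutually independent; (iii) for each pair, $(h_{n_1,n_2,k})_k$ is $m$-dependent: for every $s$, $(h_{n_1,n_2,k})_{k\le s}$ is independent of $(h_{n_1,n_2,k})_{k>s+m}$. Powers $P_n>0$, noise $N_0>0$, profiles $\mathbf a\in\{1,\dots,K\}^N$, interference $I_k(\mathbf a_{-n})=\sum_{m'\ne n:\,a_{m'}=k}|h_{m',n,k}|^2P_{m'}$. $|h_{n,n,(j)}|$ is the $j$-th smallest of $|h_{n,n,1}|,\dots,|h_{n,n,K}|$. M-FSIG with integer parameter $M$: utility $u_n(\mathbf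 a)=\log_2\!\big(1+\frac{P_n|h_{n,n,(K-M+1)}|^2}{N_0+I_{a_n}(\mathbf a_{-n})}\big)$ if $|h_{n,n,a_n}|\ge|h_{n,n,(K-M+1)}|$, and $0$ otherwise. $\mathcal P_e$ is its set of pure Nash equilibria (profiles where no user can strictly improve his utility unilaterally). A shared RE is one chosen by more than one user; a sharing user is a user whose chosen RE is shared. *)

theory Defs
  imports "HOL-Probability.Probability"
begin

text \<open>Users and resource elements (REs) are indexed by 1..N (K = N).
  A channel realisation is h :: nat => nat => nat => complex, h n1 n2 k = h_{n1,n2,k}.\<close>

definition interf :: "nat \<Rightarrow> (nat \<Rightarrow> real) \<Rightarrow> (nat \<Rightarrow> nat \<Rightarrow> nat \<Rightarrow> complex)
    \<Rightarrow> (nat \<Rightarrow> nat) \<Rightarrow> nat \<Rightarrow> nat \<Rightarrow> real" where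
  "interf N P h a n k =
     (\<Sum>m' \<in> {m'\<in>{1..N}. m' \<noteq> n \<and> a m' = k}. (cmod (h m' n k))\<^sup>2 * P m')"

definition ordstat :: "nat \<Rightarrow> (nat \<Rightarrow> nat \<Rightarrow> nat \<Rightarrow> complex) \<Rightarrow> nat \<Rightarrow> nat \<Rightarrow> real" where
  "ordstat K h n j = sort (map (\<lambda>k. cmod (h n n k)) [1..<K+1]) ! (j - 1)"

definition utility :: "nat \<Rightarrow> nat \<Rightarrow> (nat \<Rightarrow> real) \<Rightarrow> real
    \<Rightarrow> (nat \<Rightarrow> nat \<Rightarrow> nat \<Rightarrow> complex) \<Rightarrow> (nat \<Rightarrow> nat) \<Rightarrow> nat \<Rightarrow> real" where
  "utility N M P N0 h a n =
     (let t = ordstat N h n (N - M + 1) in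
      if cmod (h n n (a n)) \<ge> t
      then log 2 (1 + P n * t\<^sup>2 / (N0 + interf N P h a n (a n)))
      else 0)"

definition profiles :: "nat \<Rightarrow> (nat \<Rightarrow> nat) set" where
  "profiles N = PiE {1..N} (\<lambda>_. {1..N})"

definition PNE :: "nat \<Rightarrow> nat \<Rightarrow> (nat \<Rightarrow> real) \<Rightarrow> real
    \<Rightarrow> (nat \<Rightarrow> nat \<Rightarrow> nat \<Rightarrow> complex) \<Rightarrow> (nat \<Rightarrow> nat) set" where
  "PNE N M P N0 h =
     {a \<in> profiles N. \<forall>n\<in>{1..N}. \<forall>k\<in>{1..N}.
        utility N M P N0 h (a(n := k)) n \<le> utility N M P N0 h a n}"

definition num_sharing :: "nat \<Rightarrow> (nat \<Rightarrow> nat) \<Rightarrow> nat" where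
  "num_sharing N a = card {n\<in>{1..N}. \<exists>n'\<in>{1..N}. n' \<noteq> n \<and> a n' = a n}"

definition max_share_frac :: "nat \<Rightarrow> nat \<Rightarrow> (nat \<Rightarrow> real) \<Rightarrow> real
    \<Rightarrow> (nat \<Rightarrow> nat \<Rightarrow> nat \<Rightarrow> complex) \<Rightarrow> real" where
  "max_share_frac N M P N0 h =
     (if PNE N M P N0 h = {} then 0
      else Max ((\<lambda>a. real (num_sharing N a) / real N) ` PNE N M P N0 h))"

text \<open>m-dependent frequency-selective channel with N users and K = N REs on the
  probability space \<Omega>; X n1 n2 k \<omega> = h_{n1,n2,k}(\<omega>).\<close>
definition m_dep_channel :: "'a measure \<Rightarrow> nat \<Rightarrow> nat
    \<Rightarrow> (nat \<Rightarrow> nat \<Rightarrow> nat \<Rightarrow> 'a \<Rightarrow> complex) \<Rightarrow> bool" where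
  "m_dep_channel \<Omega> N m X \<longleftrightarrow>
     (\<forall>n1\<in>{1..N}. \<forall>n2\<in>{1..N}. \<forall>k\<in>{1..N}.
        X n1 n2 k \<in> borel_measurable \<Omega>) \<and>
     (\<forall>n1\<in>{1..N}. \<forall>n2\<in>{1..N}. \<forall>k\<in>{1..N}.
        distr \<Omega> borel (X n1 n2 k) = distr \<Omega> borel (X n1 n2 1) \<and>
        measure \<Omega> {\<omega>\<in>space \<Omega>. cmod (X n1 n2 k \<omega>) = 0} = 0) \<and>
     prob_space.indep_vars \<Omega> (\<lambda>_. PiM {1..N} (\<lambda>_. borel))
        (\<lambda>p \<omega>. \<lambda>k\<in>{1..N}. X (fst p) (snd p) k \<omega>) ({1..N} \<times> {1..N}) \<and>
     (\<forall>n1\<in>{1..N}. \<forall>n2\<in>{1..N}. \<forall>s.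
        prob_space.indep_var \<Omega>
          (PiM {k\<in>{1..N}. k \<le> s} (\<lambda>_. borel))
          (\<lambda>\<omega>. \<lambda>k\<in>{k\<in>{1..N}. k \<le> s}. X n1 n2 k \<omega>)
          (PiM {k\<in>{1..N}. s + m < k} (\<lambda>_. borel))
          (\<lambda>\<omega>. \<lambda>k\<in>{k\<in>{1..N}. s + m < k}. X n1 n2 k \<omega>))"

end

theory Submission
  imports Defs
begin

text \<open>
  In a pure Nash equilibrium with nonzero gains, a sharing user suffers interference and would
  strictly gain by moving to a free RE, unless all its own gains on the free REs lie below its
  threshold, the (N-M+1)-th smallest of its own gains. Every shared RE hosts at least two users,
  so there are at least half as many free REs as sharing users. Hence more than delta N sharing
  users force a set S of more than delta N users and a set E of more than delta N / 2 REs such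
  that every gain of a user in S on an RE in E is below that user's threshold.

  For one user, fix the level c exceeded by each of its gains with probability M/(2N). If all its
  gains on E are below threshold, then either at least M of its N gains exceed c (their expected
  number being M/2), or none of those on E does (expected number |E| M/(2N)). The exceedance
  indicators are m-dependent, so each count has variance at most (2m+1) times its mean, and
  Chebyshev's inequality bounds the probability by some p = O(m/(delta M)). Independence across
  users and a union bound over the at most 4^N pairs (S, E) bound the probability of the bad event
  by (4 p^delta)^N, which tends to 0 as M tends to infinity. The logarithmic lower bound on M is
  only used to make M tend to infinity.
\<close>

section \<open>Order statistics\<close>

lemma sort_nth_le_iff_card:
  fixes f :: "nat \<Rightarrow> real"
  assumes j: "j < N"
  shows "sort (map f [1..<N+1]) ! j \<le> c \<longleftrightarrow> j < card {k\<in>{1..N}. f k \<le> c}"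
proof -
  define ys where "ys = sort (map f [1..<N+1])"
  have len: "length ys = N" and sor: "sorted ys" by (simp_all add: ys_def)
  have "card {k\<in>{1..N}. f k \<le> c} = length (filter (\<lambda>k. f k \<le> c) [1..<N+1])"
    by (subst distinct_length_filter) (auto intro: arg_cong[where f=card])
  also have "\<dots> = length (filter (\<lambda>x. x \<le> c) (map f [1..<N+1]))"
    by (simp add: filter_map comp_def)
  also have "\<dots> = length (filter (\<lambda>x. x \<le> c) ys)"
    unfolding ys_def by (metis mset_filter mset_sort size_mset)
  also have "\<dots> = card {i. i < N \<and> ys ! i \<le> c}"
    by (simp add: length_filter_conv_card len)
  finally have card_eq: "card {k\<in>{1..N}. f k \<le> c} = card {i. i < N \<and> ys ! i \<le> c}" .
  show ?thesis
    unfolding ys_def[symmetric] card_eq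
  proof
    assume "ys ! j \<le> c"
    then have "{..j} \<subseteq> {i. i < N \<and> ys ! i \<le> c}"
      using sorted_nth_mono[OF sor, of _ j] j len by (auto intro: order_trans)
    from card_mono[OF _ this] show "j < card {i. i < N \<and> ys ! i \<le> c}" by simp
  next
    assume card: "j < card {i. i < N \<and> ys ! i \<le> c}"
    show "ys ! j \<le> c"
    proof (rule ccontr)
      assume above: "\<not> ys ! j \<le> c"
      have "{i. i < N \<and> ys ! i \<le> c} \<subseteq> {..<j}"
      proof
        fix i assume i: "i \<in> {i. i < N \<and> ys ! i \<le> c}"
        show "i \<in> {..<j}"
          using sorted_nth_mono[OF sor, of j i] i len above by (cases "j \<le> i") auto
      qed
      from card_mono[OF _ this] card show False by simp
    qed
  qed
qed

lemma ordstat_le_iff_card: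
  assumes "1 \<le> M" "M \<le> N"
  shows "ordstat N h n (N - M + 1) \<le> c \<longleftrightarrow> N - M < card {k\<in>{1..N}. cmod (h n n k) \<le> c}"
  unfolding ordstat_def using sort_nth_le_iff_card[of "N - M" N] assms by simp

lemma ordstat_pos:
  assumes "1 \<le> M" "M \<le> N" and nz: "\<forall>k\<in>{1..N}. h n n k \<noteq> 0"
  shows "ordstat N h n (N - M + 1) > 0"
proof -
  have none: "{k\<in>{1..N}. cmod (h n n k) \<le> 0} = {}" using nz by auto
  have "\<not> ordstat N h n (N - M + 1) \<le> 0" unfolding ordstat_le_iff_card[OF assms(1,2)] none by simp
  then show ?thesis by simp
qed

lemma sort_nth_measurable:
  fixes g :: "nat \<Rightarrow> 'a \<Rightarrow> real"
  assumes g: "\<And>k. k \<in> {1..N} \<Longrightarrow> g k \<in> borel_measurable M"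
  shows "(\<lambda>x. sort (map (\<lambda>k. g k x) [1..<N+1]) ! j) \<in> borel_measurable M"
proof (cases "j < N")
  case True
  show ?thesis
  proof (subst borel_measurable_iff_le, intro allI)
    fix c
    have count: "(\<lambda>x. \<Sum>k\<in>{1..N}. of_bool (g k x \<le> c) :: real) \<in> borel_measurable M"
      using g by (intro borel_measurable_sum) auto
    have "sort (map (\<lambda>k. g k x) [1..<N+1]) ! j \<le> c
        \<longleftrightarrow> real j < (\<Sum>k\<in>{1..N}. of_bool (g k x \<le> c))" for x
    proof -
      have "sort (map (\<lambda>k. g k x) [1..<N+1]) ! j \<le> c \<longleftrightarrow> j < card {k\<in>{1..N}. g k x \<le> c}"
        by (rule sort_nth_le_iff_card[OF True])
      also have "\<dots> \<longleftrightarrow> real j < (\<Sum>k\<in>{1..N}. of_bool (g k x \<le> c))"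
        by (simp add: Int_def conj_commute)
      finally show ?thesis .
    qed
    then have "{x \<in> space M. sort (map (\<lambda>k. g k x) [1..<N+1]) ! j \<le> c}
        = {x \<in> space M. real j < (\<Sum>k\<in>{1..N}. of_bool (g k x \<le> c))}"
      by simp
    also have "\<dots> \<in> sets M" using count by measurable
    finally show "{x \<in> space M. sort (map (\<lambda>k. g k x) [1..<N+1]) ! j \<le> c} \<in> sets M" .
  qed
next
  case False
  \<comment> \<open>Out of range, \<open>nth\<close> returns the same unspecified value for every \<open>x\<close>.\<close>
  have "sort (map (\<lambda>k. g k x) [1..<N+1]) ! j = [] ! (j - N)" for x
  proof -
    have "j = length (sort (map (\<lambda>k. g k x) [1..<N+1])) + (j - N)"
      using False by (simp del: upt_Suc)
    then show ?thesis by (metis nth_append_length_plus append_Nil2)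
  qed
  then show ?thesis by simp
qed

lemma ordstat_measurable:
  fixes X :: "nat \<Rightarrow> nat \<Rightarrow> nat \<Rightarrow> 'a \<Rightarrow> complex"
  assumes "\<And>k. k \<in> {1..N} \<Longrightarrow> X n n k \<in> borel_measurable M"
  shows "(\<lambda>x. ordstat N (\<lambda>n1 n2 k. X n1 n2 k x) n j) \<in> borel_measurable M"
  unfolding ordstat_def by (rule sort_nth_measurable) (use assms in measurable)

text \<open>The threshold condition as a predicate on a user's vector of own gains, so that events
  concerning different users are events about independent vector-valued random variables.\<close>

definition below_threshold :: "nat \<Rightarrow> nat \<Rightarrow> nat set \<Rightarrow> (nat \<Rightarrow> complex) \<Rightarrow> bool" where
  "below_threshold N M E g \<longleftrightarrow>
     (\<forall>k\<in>E. cmod (g k) < sort (map (\<lambda>k. cmod (g k)) [1..<N+1]) ! (N - M))"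

lemma below_threshold_iff_ordstat:
  assumes "E \<subseteq> {1..N}"
  shows "below_threshold N M E (\<lambda>k\<in>{1..N}. h n n k)
    \<longleftrightarrow> (\<forall>k\<in>E. cmod (h n n k) < ordstat N h n (N - M + 1))"
proof -
  have gains: "map (\<lambda>k. cmod ((\<lambda>k\<in>{1..N}. h n n k) k)) [1..<N+1]
      = map (\<lambda>k. cmod (h n n k)) [1..<N+1]"
    by (intro map_cong) auto
  show ?thesis
    unfolding below_threshold_def ordstat_def gains add_diff_cancel_right'
    using assms by (intro ball_cong) auto
qed

lemma below_threshold_measurable:
  assumes "E \<subseteq> {1..N}"
  shows "{g\<in>space (PiM {1..N} (\<lambda>_. borel)). below_threshold N M E g}
    \<in> sets (PiM {1..N} (\<lambda>_. borel :: complex measure))"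
proof -
  have [measurable]: "(\<lambda>g. sort (map (\<lambda>k. cmod (g k)) [1..<N+1]) ! (N - M))
      \<in> borel_measurable (PiM {1..N} (\<lambda>_. borel :: complex measure))"
    by (rule sort_nth_measurable[where g="\<lambda>k g. cmod (g k)"]) auto
  show ?thesis unfolding below_threshold_def
  proof (rule sets.sets_Collect_finite_All)
    show "finite E" using assms finite_subset by blast
    fix k assume "k \<in> E"
    then have [measurable]:
        "(\<lambda>g. cmod (g k)) \<in> borel_measurable (PiM {1..N} (\<lambda>_. borel :: complex measure))"
      using assms by auto
    show "{g \<in> space (PiM {1..N} (\<lambda>_. borel)).
        cmod (g k) < sort (map (\<lambda>k. cmod (g k)) [1..<N+1]) ! (N - M)}
      \<in> sets (PiM {1..N} (\<lambda>_. borel))" by measurable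
  qed
qed

lemma below_order_stat_imp_count:
  fixes y :: "nat \<Rightarrow> real"
  assumes M: "1 \<le> M" "M \<le> N" and below: "\<forall>k\<in>E. y k < sort (map y [1..<N+1]) ! (N - M)"
  shows "M \<le> card {k\<in>{1..N}. c < y k} \<or> {k\<in>E. c < y k} = {}"
proof (cases "sort (map y [1..<N+1]) ! (N - M) \<le> c")
  case True
  then show ?thesis using below by force
next
  case False
  then have "card {k\<in>{1..N}. y k \<le> c} \<le> N - M"
    using sort_nth_le_iff_card[of "N - M" N y c] M by simp
  moreover have "{k\<in>{1..N}. y k \<le> c} \<union> {k\<in>{1..N}. c < y k} = {1..N}" by auto
  then have "card {k\<in>{1..N}. y k \<le> c} + card {k\<in>{1..N}. c < y k} = N"
    by (metis (no_types, lifting) card_Un_disjoint card_atLeastAtMost diff_Suc_1 disjoint_iff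
        finite_atLeastAtMost finite_subset mem_Collect_eq not_less sup_ge1 sup_ge2)
  ultimately show ?thesis using M by linarith
qed

section \<open>Sharing users in equilibrium\<close>

lemma PNE_sharing_user_below_threshold_on_free_RE:
  assumes a: "a \<in> PNE N M P N0 h" and M: "1 \<le> M" "M \<le> N"
    and P: "\<And>n. P n > 0" and N0: "N0 > 0"
    and nz: "\<forall>n1\<in>{1..N}. \<forall>n2\<in>{1..N}. \<forall>k\<in>{1..N}. h n1 n2 k \<noteq> 0"
    and sharing: "n \<in> {1..N}" "n' \<in> {1..N}" "n' \<noteq> n" "a n' = a n"
    and free: "k \<in> {1..N} - a ` {1..N}"
  shows "cmod (h n n k) < ordstat N h n (N - M + 1)"
proof (rule ccontr)
  assume "\<not> ?thesis"
  then have above: "ordstat N h n (N - M + 1) \<le> cmod (h n n k)" by simp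
  define t where "t = ordstat N h n (N - M + 1)"
  define u_free where "u_free = log 2 (1 + P n * t\<^sup>2 / N0)"
  have t_pos: "t > 0" unfolding t_def using ordstat_pos[OF M] nz sharing(1) by auto
  have an: "a n \<in> {1..N}" using a sharing(1) unfolding PNE_def profiles_def by auto
  have "interf N P h (a(n := k)) n k = 0"
    unfolding interf_def using free by (intro sum.neutral) auto
  then have deviate: "utility N M P N0 h (a(n := k)) n = u_free"
    unfolding utility_def Let_def u_free_def t_def using above by simp
  have "0 < (cmod (h n' n (a n)))\<^sup>2 * P n'"
    using nz sharing an P by auto
  also have "\<dots> \<le> interf N P h a n (a n)"
    unfolding interf_def using sharing P
    by (intro member_le_sum) (auto simp: less_imp_le)
  finally have interf_pos: "interf N P h a n (a n) > 0" .
  have gain_pos: "P n * t\<^sup>2 > 0" using P t_pos by simp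
  have "utility N M P N0 h a n < u_free"
  proof (cases "t \<le> cmod (h n n (a n))")
    case True
    then have "utility N M P N0 h a n = log 2 (1 + P n * t\<^sup>2 / (N0 + interf N P h a n (a n)))"
      unfolding utility_def Let_def t_def by simp
    also have "\<dots> < u_free"
    proof -
      have "P n * t\<^sup>2 / (N0 + interf N P h a n (a n)) < P n * t\<^sup>2 / N0"
        using gain_pos N0 interf_pos by (intro divide_strict_left_mono) auto
      moreover have "0 \<le> P n * t\<^sup>2 / (N0 + interf N P h a n (a n))"
        using gain_pos N0 interf_pos by simp
      ultimately show ?thesis unfolding u_free_def by simp
    qed
    finally show ?thesis .
  next
    case False
    have "0 < P n * t\<^sup>2 / N0" using gain_pos N0 by simp
    then have "0 < u_free" unfolding u_free_def by simp
    then show ?thesis using False unfolding utility_def Let_def t_def by simp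
  qed
  moreover have "utility N M P N0 h (a(n := k)) n \<le> utility N M P N0 h a n"
    using a sharing(1) free unfolding PNE_def by auto
  ultimately show False using deviate by simp
qed

lemma num_sharing_le_twice_free_REs:
  assumes a: "a ` {1..N} \<subseteq> {1..N}"
  shows "num_sharing N a \<le> 2 * card ({1..N} - a ` {1..N})"
proof -
  define U where "U = {1..N::nat}"
  define S where "S = {n\<in>U. \<exists>n'\<in>U. n' \<noteq> n \<and> a n' = a n}"
  have SU: "S \<subseteq> U" and fS: "finite S" by (auto simp: S_def U_def)
  \<comment> \<open>Every RE chosen by a sharing user is chosen by at least two of them.\<close>
  have "card S = (\<Sum>v\<in>a ` S. card {s\<in>S. a s = v})"
    using fS by (subst card_UN_disjoint[symmetric]) (auto intro!: arg_cong[where f=card])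
  moreover have "2 \<le> card {s\<in>S. a s = v}" if "v \<in> a ` S" for v
  proof -
    obtain s s' where s: "s \<in> S" "a s = v" "s' \<in> U" "s' \<noteq> s" "a s' = a s"
      using \<open>v \<in> a ` S\<close> unfolding S_def by blast
    then have "s' \<in> S" unfolding S_def by auto
    then have "{s, s'} \<subseteq> {s\<in>S. a s = v}" using s by auto
    from card_mono[OF _ this] show ?thesis using s fS by auto
  qed
  ultimately have half: "2 * card (a ` S) \<le> card S"
    using sum_mono[of "a ` S" "\<lambda>_. 2::nat"] by (simp add: mult.commute)
  have "a ` U = a ` (U - S) \<union> a ` S" using SU by auto
  then have "card (a ` U) \<le> card (a ` (U - S)) + card (a ` S)" by (metis card_Un_le)
  also have "\<dots> \<le> card (U - S) + card (a ` S)" by (simp add: card_image_le U_def)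
  also have "card (U - S) = N - card S" using SU fS by (simp add: card_Diff_subset U_def)
  finally have "card (a ` U) \<le> N - card S + card (a ` S)" .
  moreover have "card S \<le> N" using card_mono[OF _ SU] by (simp add: U_def)
  moreover have "card ({1..N} - a ` {1..N}) = N - card (a ` U)"
    using a by (simp add: card_Diff_subset U_def)
  ultimately show ?thesis using half unfolding num_sharing_def S_def[unfolded U_def, symmetric]
    by linarith
qed

lemma finite_profiles: "finite (profiles N)"
  unfolding profiles_def by (intro finite_PiE) auto

lemma finite_PNE: "finite (PNE N M P N0 h)"
  using finite_profiles by (rule rev_finite_subset) (auto simp: PNE_def)

lemma max_share_frac_gt_iff:
  assumes "\<delta> \<ge> 0"
  shows "max_share_frac N M P N0 h > \<delta> \<longleftrightarrow>
    (\<exists>a\<in>PNE N M P N0 h. real (num_sharing N a) / real N > \<delta>)"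
  using assms finite_PNE by (auto simp: max_share_frac_def Max_gr_iff)

lemma max_share_frac_nonneg: "max_share_frac N M P N0 h \<ge> 0"
proof (cases "PNE N M P N0 h = {}")
  case False
  then obtain a where "a \<in> PNE N M P N0 h" by auto
  then have "real (num_sharing N a) / real N \<le> max_share_frac N M P N0 h"
    unfolding max_share_frac_def using False finite_PNE by (auto intro!: Max_ge)
  then show ?thesis by (meson divide_nonneg_nonneg of_nat_0_le_iff order_trans)
qed (simp add: max_share_frac_def)

lemma max_share_frac_gt_imp_users_below_threshold:
  assumes M: "1 \<le> M" "M \<le> N" and P: "\<And>n. P n > 0" and N0: "N0 > 0"
    and nz: "\<forall>n1\<in>{1..N}. \<forall>n2\<in>{1..N}. \<forall>k\<in>{1..N}. h n1 n2 k \<noteq> 0"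
    and \<delta>: "\<delta> \<ge> 0" and gt: "max_share_frac N M P N0 h > \<delta>"
  obtains S E where "S \<subseteq> {1..N}" "E \<subseteq> {1..N}" "\<delta> * real N < real (card S)"
    "card S \<le> 2 * card E" "\<And>n. n \<in> S \<Longrightarrow> below_threshold N M E (\<lambda>k\<in>{1..N}. h n n k)"
proof -
  obtain a where a: "a \<in> PNE N M P N0 h" and many: "real (num_sharing N a) / real N > \<delta>"
    using gt max_share_frac_gt_iff[OF \<delta>] by auto
  define S where "S = {n\<in>{1..N}. \<exists>n'\<in>{1..N}. n' \<noteq> n \<and> a n' = a n}"
  define E where "E = {1..N} - a ` {1..N}"
  have "a ` {1..N} \<subseteq> {1..N}" using a unfolding PNE_def profiles_def by auto
  from num_sharing_le_twice_free_REs[OF this] have "card S \<le> 2 * card E"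
    unfolding num_sharing_def S_def E_def .
  moreover have "\<delta> * real N < real (card S)"
    using many M unfolding num_sharing_def S_def[symmetric] by (simp add: pos_less_divide_eq)
  moreover have "S \<subseteq> {1..N}" "E \<subseteq> {1..N}" unfolding S_def E_def by auto
  moreover have "below_threshold N M E (\<lambda>k\<in>{1..N}. h n n k)" if "n \<in> S" for n
    unfolding below_threshold_iff_ordstat[OF \<open>E \<subseteq> {1..N}\<close>]
    using that PNE_sharing_user_below_threshold_on_free_RE[OF a M P N0 nz]
    unfolding S_def E_def by blast
  ultimately show thesis using that by blast
qed

lemma subset_pairs_finite_card_le:
  shows "finite {(S, E). S \<subseteq> {1..N::nat} \<and> E \<subseteq> {1..N} \<and> Q S E}"
    and "card {(S, E). S \<subseteq> {1..N::nat} \<and> E \<subseteq> {1..N} \<and> Q S E} \<le> 4 ^ N"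
proof -
  have sub: "{(S, E). S \<subseteq> {1..N} \<and> E \<subseteq> {1..N} \<and> Q S E} \<subseteq> Pow {1..N} \<times> Pow {1..N}" by auto
  then show "finite {(S, E). S \<subseteq> {1..N::nat} \<and> E \<subseteq> {1..N} \<and> Q S E}"
    by (rule finite_subset) simp
  have "card (Pow {1..N::nat} \<times> Pow {1..N}) = 4 ^ N"
    by (simp add: card_cartesian_product card_Pow power_mult_distrib[symmetric])
  then show "card {(S, E). S \<subseteq> {1..N::nat} \<and> E \<subseteq> {1..N} \<and> Q S E} \<le> 4 ^ N"
    using card_mono[OF _ sub] by simp
qed

section \<open>Measurability of the equilibrium events\<close>

lemma interf_measurable:
  fixes X :: "nat \<Rightarrow> nat \<Rightarrow> nat \<Rightarrow> 'a \<Rightarrow> complex"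
  assumes X: "\<And>m'. m' \<in> {1..N} \<Longrightarrow> X m' n k \<in> borel_measurable M"
  shows "(\<lambda>x. interf N P (\<lambda>n1 n2 k. X n1 n2 k x) a n k) \<in> borel_measurable M"
  unfolding interf_def using X by (intro borel_measurable_sum) auto

lemma utility_measurable:
  fixes X :: "nat \<Rightarrow> nat \<Rightarrow> nat \<Rightarrow> 'a \<Rightarrow> complex"
  assumes X: "\<And>n1 n2 k. n1 \<in> {1..N} \<Longrightarrow> n2 \<in> {1..N} \<Longrightarrow> k \<in> {1..N} \<Longrightarrow>
      X n1 n2 k \<in> borel_measurable M"
    and n: "n \<in> {1..N}" and an: "a n \<in> {1..N}"
  shows "(\<lambda>x. utility N M' P N0 (\<lambda>n1 n2 k. X n1 n2 k x) a n) \<in> borel_measurable M"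
proof -
  note [measurable] = ordstat_measurable[of N X n M, OF X[OF n n]]
    interf_measurable[of N X n "a n" M, OF X[OF _ n an]] X[OF n n an]
  show ?thesis unfolding utility_def Let_def by measurable
qed

lemma PNE_event_measurable:
  fixes X :: "nat \<Rightarrow> nat \<Rightarrow> nat \<Rightarrow> 'a \<Rightarrow> complex"
  assumes X: "\<And>n1 n2 k. n1 \<in> {1..N} \<Longrightarrow> n2 \<in> {1..N} \<Longrightarrow> k \<in> {1..N} \<Longrightarrow>
      X n1 n2 k \<in> borel_measurable M"
    and a: "a \<in> profiles N"
  shows "{x\<in>space M. a \<in> PNE N M' P N0 (\<lambda>n1 n2 k. X n1 n2 k x)} \<in> sets M"
proof -
  have a_range: "a n \<in> {1..N}" if "n \<in> {1..N}" for n
    using a that unfolding profiles_def by auto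
  have "{x\<in>space M. \<forall>n\<in>{1..N}. \<forall>k\<in>{1..N}.
      utility N M' P N0 (\<lambda>n1 n2 k. X n1 n2 k x) (a(n := k)) n
        \<le> utility N M' P N0 (\<lambda>n1 n2 k. X n1 n2 k x) a n} \<in> sets M"
  proof (intro sets.sets_Collect_finite_All finite_atLeastAtMost)
    fix n k assume nk: "n \<in> {1..N}" "k \<in> {1..N}"
    have "(a(n := k)) n \<in> {1..N}" using nk by simp
    note [measurable] = utility_measurable[where a="a(n := k)", OF X nk(1) this]
      utility_measurable[where a=a, OF X nk(1) a_range[OF nk(1)]]
    show "{x\<in>space M. utility N M' P N0 (\<lambda>n1 n2 k. X n1 n2 k x) (a(n := k)) n
        \<le> utility N M' P N0 (\<lambda>n1 n2 k. X n1 n2 k x) a n} \<in> sets M"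
      using nk by measurable
  qed
  then show ?thesis using a unfolding PNE_def by simp
qed

lemma max_share_frac_gt_measurable:
  fixes X :: "nat \<Rightarrow> nat \<Rightarrow> nat \<Rightarrow> 'a \<Rightarrow> complex"
  assumes X: "\<And>n1 n2 k. n1 \<in> {1..N} \<Longrightarrow> n2 \<in> {1..N} \<Longrightarrow> k \<in> {1..N} \<Longrightarrow>
      X n1 n2 k \<in> borel_measurable M"
  shows "{x\<in>space M. max_share_frac N M' P N0 (\<lambda>n1 n2 k. X n1 n2 k x) > \<delta>} \<in> sets M"
proof (cases "\<delta> < 0")
  case True
  then have "{x\<in>space M. max_share_frac N M' P N0 (\<lambda>n1 n2 k. X n1 n2 k x) > \<delta>} = space M"
    using max_share_frac_nonneg by (auto intro: less_le_trans)
  then show ?thesis by simp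
next
  case False
  define A where "A = {a\<in>profiles N. real (num_sharing N a) / real N > \<delta>}"
  have "finite A" unfolding A_def using finite_profiles by simp
  moreover have "{x\<in>space M. max_share_frac N M' P N0 (\<lambda>n1 n2 k. X n1 n2 k x) > \<delta>}
     = (\<Union>a\<in>A. {x\<in>space M. a \<in> PNE N M' P N0 (\<lambda>n1 n2 k. X n1 n2 k x)})"
    using False unfolding max_share_frac_gt_iff[OF not_less[THEN iffD1, OF False]] A_def PNE_def
    by auto
  ultimately show ?thesis
    using PNE_event_measurable[OF X] by (auto simp: A_def)
qed

section \<open>Counts of \<open>m\<close>-dependent events\<close>

lemma card_within_distance_le: "card {k\<in>K. k \<le> j + m \<and> j \<le> k + m} \<le> 2 * m + 1"
proof -
  have "card {k\<in>K. k \<le> j + m \<and> j \<le> k + m} \<le> card {j - m..j + m}"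
    by (intro card_mono) auto
  then show ?thesis by simp
qed

context prob_space
begin

lemma indicator_dev_mult_integrable_expectation:
  assumes "A \<in> events" "B \<in> events" "prob A = \<rho>" "prob B = \<rho>"
  shows "integrable M (\<lambda>x. (indicator A x - \<rho>) * (indicator B x - \<rho>) :: real)"
    and "expectation (\<lambda>x. (indicator A x - \<rho>) * (indicator B x - \<rho>)) = prob (A \<inter> B) - \<rho> * \<rho>"
proof -
  have expand: "(\<lambda>x. (indicator A x - \<rho>) * (indicator B x - \<rho>))
      = (\<lambda>x. indicator (A \<inter> B) x - \<rho> * indicator A x - \<rho> * indicator B x + \<rho> * \<rho> :: real)"
    by (auto simp: indicator_def algebra_simps)
  have "integrable M (indicator C :: 'a \<Rightarrow> real)" if "C \<in> events" for C
    using that by (intro integrable_real_indicator) (auto simp: less_top[symmetric])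
  then show "integrable M (\<lambda>x. (indicator A x - \<rho>) * (indicator B x - \<rho>) :: real)"
    and "expectation (\<lambda>x. (indicator A x - \<rho>) * (indicator B x - \<rho>)) = prob (A \<inter> B) - \<rho> * \<rho>"
    unfolding expand using assms by (simp_all add: prob_space)
qed

lemma m_dependent_count_second_moment_le:
  fixes A :: "nat \<Rightarrow> 'a set"
  assumes K: "finite K" and ev: "\<And>k. k \<in> K \<Longrightarrow> A k \<in> events"
    and pr: "\<And>k. k \<in> K \<Longrightarrow> prob (A k) = \<rho>"
    and indep: "\<And>j k. j \<in> K \<Longrightarrow> k \<in> K \<Longrightarrow> j + m < k \<Longrightarrow> prob (A j \<inter> A k) = \<rho> * \<rho>"
  shows "expectation (\<lambda>x. ((\<Sum>k\<in>K. indicator (A k) x) - real (card K) * \<rho>)\<^sup>2)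
    \<le> real (2*m+1) * real (card K) * \<rho>"
proof -
  define D where "D k x = indicator (A k) x - \<rho>" for k x
  define near where "near j = {k\<in>K. k \<le> j + m \<and> j \<le> k + m}" for j
  have D_int: "integrable M (\<lambda>x. D j x * D k x)" if "j \<in> K" "k \<in> K" for j k
    unfolding D_def using that ev pr by (intro indicator_dev_mult_integrable_expectation(1))
  have "((\<Sum>k\<in>K. indicator (A k) x) - real (card K) * \<rho>)\<^sup>2 = (\<Sum>j\<in>K. \<Sum>k\<in>K. D j x * D k x)"
    for x
  proof -
    have "(\<Sum>k\<in>K. indicator (A k) x) - real (card K) * \<rho> = (\<Sum>k\<in>K. D k x)"
      by (simp add: D_def sum_subtractf)
    then show ?thesis by (simp add: power2_eq_square sum_product)
  qed
  then have "expectation (\<lambda>x. ((\<Sum>k\<in>K. indicator (A k) x) - real (card K) * \<rho>)\<^sup>2)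
      = (\<Sum>j\<in>K. \<Sum>k\<in>K. expectation (\<lambda>x. D j x * D k x))"
    using D_int by (simp add: Bochner_Integration.integral_sum)
  also have "\<dots> = (\<Sum>j\<in>K. \<Sum>k\<in>K. prob (A j \<inter> A k) - \<rho> * \<rho>)"
    unfolding D_def using ev pr by (simp add: indicator_dev_mult_integrable_expectation(2))
  also have "\<dots> \<le> (\<Sum>j\<in>K. \<Sum>k\<in>K. if k \<in> near j then \<rho> else 0)"
  proof (intro sum_mono)
    fix j k assume jk: "j \<in> K" "k \<in> K"
    show "prob (A j \<inter> A k) - \<rho> * \<rho> \<le> (if k \<in> near j then \<rho> else 0)"
    proof (cases "k \<in> near j")
      case True
      have "prob (A j \<inter> A k) \<le> prob (A j)" using ev jk by (intro finite_measure_mono) auto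
      moreover have "0 \<le> \<rho> * \<rho>" by simp
      ultimately show ?thesis unfolding if_P[OF True] using pr[OF jk(1)] by linarith
    next
      case False
      then have "j + m < k \<or> k + m < j" using jk by (auto simp: near_def)
      then have "prob (A j \<inter> A k) = \<rho> * \<rho>"
        using indep[OF jk] indep[OF jk(2,1)] by (auto simp: Int_commute)
      then show ?thesis using False by simp
    qed
  qed
  also have "\<dots> = (\<Sum>j\<in>K. \<rho> * real (card (near j)))"
    using K by (simp add: sum.If_cases near_def Int_def mult.commute)
  also have "\<dots> \<le> (\<Sum>j\<in>K. \<rho> * real (2*m+1))"
  proof (intro sum_mono mult_left_mono)
    fix j assume "j \<in> K"
    show "real (card (near j)) \<le> real (2*m+1)"
      unfolding near_def of_nat_le_iff by (rule card_within_distance_le)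
    show "0 \<le> \<rho>" using pr[OF \<open>j \<in> K\<close>] measure_nonneg by metis
  qed
  finally show ?thesis by (simp add: algebra_simps)
qed

lemma m_dependent_count_deviation_prob_le:
  fixes A :: "nat \<Rightarrow> 'a set"
  assumes K: "finite K" "K \<noteq> {}" and ev: "\<And>k. k \<in> K \<Longrightarrow> A k \<in> events"
    and pr: "\<And>k. k \<in> K \<Longrightarrow> prob (A k) = \<rho>"
    and indep: "\<And>j k. j \<in> K \<Longrightarrow> k \<in> K \<Longrightarrow> j + m < k \<Longrightarrow> prob (A j \<inter> A k) = \<rho> * \<rho>"
    and \<rho>: "\<rho> > 0"
  shows "prob {x\<in>space M. real (card K) * \<rho> \<le> \<bar>(\<Sum>k\<in>K. indicator (A k) x) - real (card K) * \<rho>\<bar>}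
    \<le> real (2*m+1) / (real (card K) * \<rho>)"
proof -
  define \<mu> where "\<mu> = real (card K) * \<rho>"
  define f where "f x = (\<Sum>k\<in>K. indicator (A k) x) - \<mu>" for x
  have \<mu>_pos: "\<mu> > 0" using K \<rho> by (simp add: \<mu>_def card_gt_0_iff)
  have f_meas [measurable]: "f \<in> borel_measurable M"
    unfolding f_def using ev by (intro borel_measurable_diff borel_measurable_sum) auto
  have "integrable M (\<lambda>x. (f x)\<^sup>2)"
  proof (rule integrable_const_bound)
    have "\<bar>f x\<bar> \<le> real (card K) + \<mu>" for x
    proof -
      have "\<bar>\<Sum>k\<in>K. indicator (A k) x :: real\<bar> \<le> (\<Sum>k\<in>K. 1)"
        by (rule order_trans[OF sum_abs]) (intro sum_mono, simp add: indicator_def)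
      then show ?thesis unfolding f_def using \<mu>_pos by simp
    qed
    then have "\<bar>f x\<bar>\<^sup>2 \<le> (real (card K) + \<mu>)\<^sup>2" for x by (intro power_mono) auto
    then show "AE x in M. norm ((f x)\<^sup>2) \<le> (real (card K) + \<mu>)\<^sup>2" by simp
  qed simp
  then have "prob {x\<in>space M. \<mu> \<le> \<bar>f x\<bar>} \<le> expectation (\<lambda>x. (f x)\<^sup>2) / \<mu>\<^sup>2"
    using \<mu>_pos by (intro second_moment_method) auto
  also have "\<dots> \<le> real (2*m+1) * \<mu> / \<mu>\<^sup>2"
  proof (rule divide_right_mono)
    show "expectation (\<lambda>x. (f x)\<^sup>2) \<le> real (2*m+1) * \<mu>"
      using m_dependent_count_second_moment_le[OF K(1) ev pr indep]
      unfolding f_def \<mu>_def by (simp add: mult.assoc)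
  qed simp
  also have "\<dots> = real (2*m+1) / \<mu>" by (simp add: power2_eq_square)
  finally show ?thesis unfolding f_def \<mu>_def .
qed

end

lemma (in prob_space) exists_tail_prob_eq:
  fixes Z :: "'a \<Rightarrow> real"
  assumes Z[measurable]: "Z \<in> borel_measurable M"
    and no_atoms: "\<And>x. prob {\<omega>\<in>space M. Z \<omega> = x} = 0"
    and \<rho>: "0 < \<rho>" "\<rho> < 1"
  obtains c where "prob {\<omega>\<in>space M. c < Z \<omega>} = \<rho>"
proof -
  define D where "D = distr M borel Z"
  interpret D: real_distribution D unfolding D_def by simp
  have cdf_eq: "cdf D x = prob {\<omega>\<in>space M. Z \<omega> \<le> x}" for x
    unfolding cdf_def D_def by (subst measure_distr) (auto simp: vimage_def Int_def conj_commute)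
  have cont: "isCont (cdf D) x" for x
  proof -
    have "measure D {x} = prob {\<omega>\<in>space M. Z \<omega> = x}"
      unfolding D_def by (subst measure_distr) (auto simp: vimage_def Int_def conj_commute)
    then show ?thesis using no_atoms D.isCont_cdf by simp
  qed
  have "eventually (\<lambda>x. cdf D x < 1 - \<rho>) at_bot"
    using order_tendstoD(2)[OF D.cdf_lim_at_bot, of "1 - \<rho>"] \<rho> by simp
  then obtain a where a: "cdf D a < 1 - \<rho>" by (auto simp: eventually_at_bot_linorder)
  have "eventually (\<lambda>x. cdf D x > 1 - \<rho>) at_top"
    using order_tendstoD(1)[OF D.cdf_lim_at_top_prob, of "1 - \<rho>"] \<rho> by simp
  then obtain b where b: "cdf D b > 1 - \<rho>" by (auto simp: eventually_at_top_linorder)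
  have "a \<le> b" using D.cdf_nondecreasing[of b a] a b by (cases "a \<le> b") auto
  then obtain c where c: "cdf D c = 1 - \<rho>"
    using IVT[of "cdf D" a "1 - \<rho>" b] a b cont by auto
  have "prob {\<omega>\<in>space M. c < Z \<omega>} = prob (space M - {\<omega>\<in>space M. Z \<omega> \<le> c})"
    by (intro arg_cong[where f=prob]) auto
  also have "\<dots> = \<rho>" using c cdf_eq by (subst prob_compl) auto
  finally show thesis by (rule that)
qed

lemma (in prob_space) prob_below_order_stat_le:
  fixes Y :: "nat \<Rightarrow> 'a \<Rightarrow> real"
  assumes Y: "\<And>k. k \<in> {1..N} \<Longrightarrow> Y k \<in> borel_measurable M"
    and tail: "\<And>k. k \<in> {1..N} \<Longrightarrow> prob {x\<in>space M. c < Y k x} = \<rho>"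
    and indep: "\<And>j k. j \<in> {1..N} \<Longrightarrow> k \<in> {1..N} \<Longrightarrow> j + m < k \<Longrightarrow>
      prob ({x\<in>space M. c < Y j x} \<inter> {x\<in>space M. c < Y k x}) = \<rho> * \<rho>"
    and Mc: "1 \<le> Mc" "Mc \<le> N" and \<rho>: "\<rho> = real Mc / (2 * real N)"
    and E: "E \<subseteq> {1..N}" "E \<noteq> {}"
  shows "prob {x\<in>space M. \<forall>k\<in>E. Y k x < sort (map (\<lambda>k. Y k x) [1..<N+1]) ! (N - Mc)}
    \<le> 2 * real (2*m+1) / real Mc + real (2*m+1) / (real (card E) * \<rho>)"
proof -
  define A where "A k = {x\<in>space M. c < Y k x}" for k
  define count where "count K x = (\<Sum>k\<in>K. indicator (A k) x :: real)" for K x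
  define dev where "dev K = {x\<in>space M. real (card K) * \<rho> \<le> \<bar>count K x - real (card K) * \<rho>\<bar>}" for K
  have A_ev: "A k \<in> events" if "k \<in> {1..N}" for k unfolding A_def using Y[OF that] by measurable
  have \<rho>_pos: "\<rho> > 0" using Mc \<rho> by simp
  have count_eq: "count K x = real (card {k\<in>K. c < Y k x})" if "finite K" "x \<in> space M" for K x
    using that by (simp add: count_def A_def indicator_def Int_def conj_commute)
  have dev_bound: "prob (dev K) \<le> real (2*m+1) / (real (card K) * \<rho>)"
    if "K \<subseteq> {1..N}" "K \<noteq> {}" for K
    unfolding dev_def count_def using that finite_subset[OF that(1)] A_ev tail indep \<rho>_pos
    by (intro m_dependent_count_deviation_prob_le) (auto simp: A_def subset_eq)
  have dev_ev: "dev K \<in> events" if "K \<subseteq> {1..N}" for K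
  proof -
    have "count K \<in> borel_measurable M"
      unfolding count_def using that A_ev by (intro borel_measurable_sum) auto
    then show ?thesis unfolding dev_def by measurable
  qed
  \<comment> \<open>The count over all REs has mean \<open>Mc/2\<close> but must reach \<open>Mc\<close>, or the count over \<open>E\<close> must vanish.\<close>
  have "{x\<in>space M. \<forall>k\<in>E. Y k x < sort (map (\<lambda>k. Y k x) [1..<N+1]) ! (N - Mc)} \<subseteq> dev {1..N} \<union> dev E"
  proof safe
    fix x assume x: "x \<in> space M" and not_dev: "x \<notin> dev E"
      and below: "\<forall>k\<in>E. Y k x < sort (map (\<lambda>k. Y k x) [1..<N+1]) ! (N - Mc)"
    have "count E x \<noteq> 0" using not_dev x \<rho>_pos by (auto simp: dev_def)
    then have "{k\<in>E. c < Y k x} \<noteq> {}" using count_eq[of E x] E(1) x finite_subset by fastforce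
    then have "Mc \<le> card {k\<in>{1..N}. c < Y k x}"
      using below_order_stat_imp_count[OF Mc, of E "\<lambda>k. Y k x" c] below by auto
    then have "real Mc \<le> count {1..N} x" using count_eq[of "{1..N}" x] x by simp
    moreover have mean: "real (card {1..N}) * \<rho> = real Mc / 2" using \<rho> Mc by simp
    ultimately show "x \<in> dev {1..N}" using x unfolding dev_def mean by simp
  qed
  then have "prob {x\<in>space M. \<forall>k\<in>E. Y k x < sort (map (\<lambda>k. Y k x) [1..<N+1]) ! (N - Mc)}
      \<le> prob (dev {1..N}) + prob (dev E)"
    using dev_ev E(1) by (intro order_trans[OF finite_measure_mono measure_subadditive]) auto
  also have "\<dots> \<le> real (2*m+1) / (real N * \<rho>) + real (2*m+1) / (real (card E) * \<rho>)"
    using dev_bound[of "{1..N}"] dev_bound[OF E] Mc by (intro add_mono) auto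
  also have "real (2*m+1) / (real N * \<rho>) = 2 * real (2*m+1) / real Mc"
    unfolding \<rho> using Mc by simp
  finally show ?thesis .
qed

section \<open>The \<open>m\<close>-dependent channel\<close>

context
  fixes \<Omega> :: "'a measure" and N m :: nat and X :: "nat \<Rightarrow> nat \<Rightarrow> nat \<Rightarrow> 'a \<Rightarrow> complex"
  assumes prob_\<Omega>: "prob_space \<Omega>" and channel: "m_dep_channel \<Omega> N m X"
begin

interpretation prob_space \<Omega> by (rule prob_\<Omega>)

lemma channel_measurable:
  "n1 \<in> {1..N} \<Longrightarrow> n2 \<in> {1..N} \<Longrightarrow> k \<in> {1..N} \<Longrightarrow> X n1 n2 k \<in> borel_measurable \<Omega>"
  using channel unfolding m_dep_channel_def by blast

lemma channel_gains_measurable: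
  "n \<in> {1..N} \<Longrightarrow> (\<lambda>\<omega>. \<lambda>k\<in>{1..N}. X n n k \<omega>) \<in> \<Omega> \<rightarrow>\<^sub>M PiM {1..N} (\<lambda>_. borel)"
  using channel_measurable by (auto intro: measurable_restrict)

lemma channel_tail_prob_eq:
  assumes n: "n \<in> {1..N}" and k: "k \<in> {1..N}"
  shows "prob {\<omega>\<in>space \<Omega>. c < cmod (X n n k \<omega>)} = prob {\<omega>\<in>space \<Omega>. c < cmod (X n n 1 \<omega>)}"
proof -
  have tail: "prob {\<omega>\<in>space \<Omega>. c < cmod (X n n j \<omega>)}
      = measure (distr \<Omega> borel (X n n j)) {z. c < cmod z}" if "j \<in> {1..N}" for j
    using channel_measurable[OF n n that]
    by (subst measure_distr) (auto simp: vimage_def Int_def conj_commute)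
  have "distr \<Omega> borel (X n n k) = distr \<Omega> borel (X n n 1)"
    using channel n k unfolding m_dep_channel_def by blast
  then show ?thesis using tail[OF k] tail[of 1] n by simp
qed

lemma channel_tail_events_indep:
  assumes n: "n \<in> {1..N}" and j: "j \<in> {1..N}" and k: "k \<in> {1..N}" and far: "j + m < k"
  shows "prob ({\<omega>\<in>space \<Omega>. c < cmod (X n n j \<omega>)} \<inter> {\<omega>\<in>space \<Omega>. c < cmod (X n n k \<omega>)})
    = prob {\<omega>\<in>space \<Omega>. c < cmod (X n n j \<omega>)} * prob {\<omega>\<in>space \<Omega>. c < cmod (X n n k \<omega>)}"
proof -
  define I1 where "I1 = {k\<in>{1..N}. k \<le> j}"
  define I2 where "I2 = {k\<in>{1..N}. j + m < k}"
  define V1 where "V1 \<omega> = (\<lambda>k\<in>I1. X n n k \<omega>)" for \<omega>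
  define V2 where "V2 \<omega> = (\<lambda>k\<in>I2. X n n k \<omega>)" for \<omega>
  have "indep_var (PiM I1 (\<lambda>_. borel)) V1 (PiM I2 (\<lambda>_. borel)) V2"
    using channel n unfolding m_dep_channel_def I1_def I2_def V1_def V2_def by blast
  moreover define Bj where "Bj = {f\<in>space (PiM I1 (\<lambda>_. borel :: complex measure)). c < cmod (f j)}"
  moreover define Bk where "Bk = {f\<in>space (PiM I2 (\<lambda>_. borel :: complex measure)). c < cmod (f k)}"
  moreover have "j \<in> I1" "k \<in> I2" using j k far by (auto simp: I1_def I2_def)
  then have "Bj \<in> sets (PiM I1 (\<lambda>_. borel))" "Bk \<in> sets (PiM I2 (\<lambda>_. borel))"
    unfolding Bj_def Bk_def by measurable
  ultimately have "prob ((\<lambda>\<omega>. (V1 \<omega>, V2 \<omega>)) -` (Bj \<times> Bk) \<inter> space \<Omega>)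
      = prob (V1 -` Bj \<inter> space \<Omega>) * prob (V2 -` Bk \<inter> space \<Omega>)"
    by (intro indep_varD)
  moreover have "V1 -` Bj \<inter> space \<Omega> = {\<omega>\<in>space \<Omega>. c < cmod (X n n j \<omega>)}"
    using \<open>j \<in> I1\<close> by (auto simp: Bj_def V1_def space_PiM)
  moreover have "V2 -` Bk \<inter> space \<Omega> = {\<omega>\<in>space \<Omega>. c < cmod (X n n k \<omega>)}"
    using \<open>k \<in> I2\<close> by (auto simp: Bk_def V2_def space_PiM)
  moreover have "(\<lambda>\<omega>. (V1 \<omega>, V2 \<omega>)) -` (Bj \<times> Bk) \<inter> space \<Omega>
      = (V1 -` Bj \<inter> space \<Omega>) \<inter> (V2 -` Bk \<inter> space \<Omega>)" by auto
  ultimately show ?thesis by simp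
qed

lemma channel_users_indep:
  assumes S: "S \<subseteq> {1..N}"
    and Q: "\<And>n. n \<in> S \<Longrightarrow> {g\<in>space (PiM {1..N} (\<lambda>_. borel)). Q n g} \<in> sets (PiM {1..N} (\<lambda>_. borel))"
  shows "prob {\<omega>\<in>space \<Omega>. \<forall>n\<in>S. Q n (\<lambda>k\<in>{1..N}. X n n k \<omega>)}
    = (\<Prod>n\<in>S. prob {\<omega>\<in>space \<Omega>. Q n (\<lambda>k\<in>{1..N}. X n n k \<omega>)})"
proof (cases "S = {}")
  case True
  then show ?thesis by (simp add: prob_space)
next
  case False
  define Y where "Y p \<omega> = (\<lambda>k\<in>{1..N}. X (fst p) (snd p) k \<omega>)" for p \<omega>
  define G where "G p = {g\<in>space (PiM {1..N} (\<lambda>_. borel)). Q (fst p) g}" for p :: "nat \<times> nat"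
  define D where "D = (\<lambda>n. (n, n)) ` S"
  have event: "Y (n, n) -` G (n, n) \<inter> space \<Omega> = {\<omega>\<in>space \<Omega>. Q n (\<lambda>k\<in>{1..N}. X n n k \<omega>)}" for n
    by (auto simp: Y_def G_def space_PiM)
  have "indep_vars (\<lambda>_. PiM {1..N} (\<lambda>_. borel)) Y ({1..N} \<times> {1..N})"
    using channel unfolding m_dep_channel_def Y_def by blast
  then have "prob (\<Inter>p\<in>D. Y p -` G p \<inter> space \<Omega>) = (\<Prod>p\<in>D. prob (Y p -` G p \<inter> space \<Omega>))"
    using S False Q finite_subset[OF S] by (intro indep_varsD) (auto simp: D_def G_def)
  moreover have "(\<Inter>p\<in>D. Y p -` G p \<inter> space \<Omega>) = {\<omega>\<in>space \<Omega>. \<forall>n\<in>S. Q n (\<lambda>k\<in>{1..N}. X n n k \<omega>)}"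
    unfolding D_def image_image event using False by auto
  moreover have "(\<Prod>p\<in>D. prob (Y p -` G p \<inter> space \<Omega>))
      = (\<Prod>n\<in>S. prob {\<omega>\<in>space \<Omega>. Q n (\<lambda>k\<in>{1..N}. X n n k \<omega>)})"
    unfolding D_def event[symmetric] by (subst prod.reindex) (auto simp: inj_on_def)
  ultimately show ?thesis by simp
qed

lemma users_below_threshold_event:
  assumes S: "S \<subseteq> {1..N}" and E: "E \<subseteq> {1..N}"
  shows "{\<omega>\<in>space \<Omega>. \<forall>n\<in>S. below_threshold N Mc E (\<lambda>k\<in>{1..N}. X n n k \<omega>)} \<in> events"
proof (rule sets.sets_Collect_finite_All)
  show "finite S" using S finite_subset by blast
  fix n assume "n \<in> S"
  then have "(\<lambda>\<omega>. \<lambda>k\<in>{1..N}. X n n k \<omega>)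
      -` {g\<in>space (PiM {1..N} (\<lambda>_. borel)). below_threshold N Mc E g} \<inter> space \<Omega> \<in> events"
    using S
    by (intro measurable_sets[OF channel_gains_measurable below_threshold_measurable[OF E]]) auto
  then show "{\<omega>\<in>space \<Omega>. below_threshold N Mc E (\<lambda>k\<in>{1..N}. X n n k \<omega>)} \<in> events"
    by (simp add: vimage_def Int_def space_PiM conj_commute)
qed

lemma channel_zero_null:
  "{\<omega>\<in>space \<Omega>. \<exists>n1\<in>{1..N}. \<exists>n2\<in>{1..N}. \<exists>k\<in>{1..N}. X n1 n2 k \<omega> = 0} \<in> null_sets \<Omega>"
proof -
  define T where "T = {1..N} \<times> {1..N} \<times> {1..N}"
  define Z where "Z t = X (fst t) (fst (snd t)) (snd (snd t)) -` {0} \<inter> space \<Omega>" for t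
  have "Z t \<in> null_sets \<Omega>" if "t \<in> T" for t
  proof
    show "Z t \<in> events"
      unfolding Z_def using that
      by (intro measurable_sets[OF channel_measurable]) (auto simp: T_def)
    have "prob (Z t) = 0"
      using channel that unfolding m_dep_channel_def Z_def T_def vimage_def Int_def
      by (auto simp: conj_commute)
    then show "emeasure \<Omega> (Z t) = 0" by (simp add: emeasure_eq_measure)
  qed
  then have "(\<Union>t\<in>T. Z t) \<in> null_sets \<Omega>"
    by (intro null_sets_UN') (auto simp: T_def intro: countable_finite)
  moreover have "{\<omega>\<in>space \<Omega>. \<exists>n1\<in>{1..N}. \<exists>n2\<in>{1..N}. \<exists>k\<in>{1..N}. X n1 n2 k \<omega> = 0} = (\<Union>t\<in>T. Z t)"
    unfolding T_def Z_def by force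
  ultimately show ?thesis by simp
qed

lemma prob_user_below_threshold_le:
  assumes no_atoms: "\<And>k x. k \<in> {1..N} \<Longrightarrow> prob {\<omega>\<in>space \<Omega>. cmod (X n n k \<omega>) = x} = 0"
    and n: "n \<in> {1..N}" and Mc: "1 \<le> Mc" "Mc \<le> N" and E: "E \<subseteq> {1..N}" "E \<noteq> {}"
  shows "prob {\<omega>\<in>space \<Omega>. below_threshold N Mc E (\<lambda>k\<in>{1..N}. X n n k \<omega>)}
    \<le> 2 * real (2*m+1) / real Mc + 2 * real (2*m+1) * real N / (real (card E) * real Mc)"
proof -
  define \<rho> where "\<rho> = real Mc / (2 * real N)"
  have one: "1 \<in> {1..N}" using n by simp
  have "0 < \<rho>" "\<rho> < 1" using Mc by (auto simp: \<rho>_def field_simps)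
  then obtain c where c: "prob {\<omega>\<in>space \<Omega>. c < cmod (X n n 1 \<omega>)} = \<rho>"
    using exists_tail_prob_eq[of "\<lambda>\<omega>. cmod (X n n 1 \<omega>)"] channel_measurable[OF n n one]
      no_atoms[OF one] by auto
  have tail: "prob {\<omega>\<in>space \<Omega>. c < cmod (X n n k \<omega>)} = \<rho>" if "k \<in> {1..N}" for k
    using channel_tail_prob_eq[OF n that] c by simp
  have "{\<omega>\<in>space \<Omega>. below_threshold N Mc E (\<lambda>k\<in>{1..N}. X n n k \<omega>)}
      = {\<omega>\<in>space \<Omega>. \<forall>k\<in>E. cmod (X n n k \<omega>)
          < sort (map (\<lambda>k. cmod (X n n k \<omega>)) [1..<N+1]) ! (N - Mc)}"
    using below_threshold_iff_ordstat[OF E(1), of Mc "\<lambda>n1 n2 k. X n1 n2 k _" n]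
    by (simp add: ordstat_def)
  also have "prob \<dots> \<le> 2 * real (2*m+1) / real Mc + real (2*m+1) / (real (card E) * \<rho>)"
    using channel_measurable[OF n n] tail channel_tail_events_indep[OF n] Mc E
    by (intro prob_below_order_stat_le[where c=c]) (auto simp: \<rho>_def)
  also have "real (2*m+1) / (real (card E) * \<rho>)
      = 2 * real (2*m+1) * real N / (real (card E) * real Mc)"
    using Mc by (simp add: \<rho>_def)
  finally show ?thesis .
qed

lemma prob_users_below_threshold_le:
  assumes no_atoms: "\<And>n k x. n \<in> {1..N} \<Longrightarrow> k \<in> {1..N} \<Longrightarrow>
      prob {\<omega>\<in>space \<Omega>. cmod (X n n k \<omega>) = x} = 0"
    and \<delta>: "\<delta> > 0" and Mc: "1 \<le> Mc" "Mc \<le> N"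
    and p: "p = 2 * real (2*m+1) / real Mc + 4 * real (2*m+1) / (\<delta> * real Mc)" and p_le_1: "p \<le> 1"
    and S: "S \<subseteq> {1..N}" "\<delta> * real N < real (card S)"
    and E: "E \<subseteq> {1..N}" "card S \<le> 2 * card E"
  shows "prob {\<omega>\<in>space \<Omega>. \<forall>n\<in>S. below_threshold N Mc E (\<lambda>k\<in>{1..N}. X n n k \<omega>)}
    \<le> p powr (\<delta> * real N)"
proof -
  have p_pos: "p > 0" unfolding p using Mc \<delta> by (intro add_pos_pos divide_pos_pos) auto
  have E_large: "\<delta> * real N < 2 * real (card E)" using S(2) E(2) by linarith
  moreover have "0 < \<delta> * real N" using \<delta> Mc by simp
  ultimately have E_pos: "real (card E) > 0" by linarith
  then have "E \<noteq> {}" by auto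
  have "2 * real (2*m+1) * real N / (real (card E) * real Mc)
      = real (2*m+1) / real Mc * (2 * real N / real (card E))" by (simp add: field_simps)
  also have "\<dots> \<le> real (2*m+1) / real Mc * (4 / \<delta>)"
    using E_large E_pos \<delta> by (intro mult_left_mono) (simp_all add: divide_simps)
  finally have "2 * real (2*m+1) * real N / (real (card E) * real Mc)
      \<le> 4 * real (2*m+1) / (\<delta> * real Mc)"
    by (simp add: mult.commute)
  then have user: "prob {\<omega>\<in>space \<Omega>. below_threshold N Mc E (\<lambda>k\<in>{1..N}. X n n k \<omega>)} \<le> p"
    if "n \<in> S" for n
    using prob_user_below_threshold_le[OF no_atoms _ Mc E(1) \<open>E \<noteq> {}\<close>, of n] that S(1)
    unfolding p by (meson add_left_mono order_trans subsetD)
  have "prob {\<omega>\<in>space \<Omega>. \<forall>n\<in>S. below_threshold N Mc E (\<lambda>k\<in>{1..N}. X n n k \<omega>)}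
      = (\<Prod>n\<in>S. prob {\<omega>\<in>space \<Omega>. below_threshold N Mc E (\<lambda>k\<in>{1..N}. X n n k \<omega>)})"
    using below_threshold_measurable[OF E(1)] by (intro channel_users_indep[OF S(1)])
  also have "\<dots> \<le> p ^ card S"
    using user by (subst prod_constant[symmetric], intro prod_mono) auto
  also have "\<dots> = p powr real (card S)" using p_pos by (simp add: powr_realpow)
  also have "\<dots> \<le> p powr (\<delta> * real N)" using S(2) p_pos p_le_1 by (intro powr_mono') auto
  finally show ?thesis .
qed

lemma prob_max_share_frac_gt_le_sum:
  assumes P: "\<And>n. P n > 0" and N0: "N0 > 0" and \<delta>: "\<delta> \<ge> 0" and Mc: "1 \<le> Mc" "Mc \<le> N"
  defines "Pairs \<equiv>
    {(S, E). S \<subseteq> {1..N} \<and> E \<subseteq> {1..N} \<and> \<delta> * real N < real (card S) \<and> card S \<le> 2 * card E}"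
  shows "prob {\<omega>\<in>space \<Omega>. max_share_frac N Mc P N0 (\<lambda>n1 n2 k. X n1 n2 k \<omega>) > \<delta>}
    \<le> (\<Sum>(S, E)\<in>Pairs. prob {\<omega>\<in>space \<Omega>. \<forall>n\<in>S. below_threshold N Mc E (\<lambda>k\<in>{1..N}. X n n k \<omega>)})"
proof -
  define W where
    "W SE = {\<omega>\<in>space \<Omega>. \<forall>n\<in>fst SE. below_threshold N Mc (snd SE) (\<lambda>k\<in>{1..N}. X n n k \<omega>)}"
    for SE
  define Z where "Z = {\<omega>\<in>space \<Omega>. \<exists>n1\<in>{1..N}. \<exists>n2\<in>{1..N}. \<exists>k\<in>{1..N}. X n1 n2 k \<omega> = 0}"
  have fin: "finite Pairs" unfolding Pairs_def by (rule subset_pairs_finite_card_le)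
  have W_ev: "W SE \<in> events" if "SE \<in> Pairs" for SE
    using that unfolding W_def by (intro users_below_threshold_event) (auto simp: Pairs_def)
  have "{\<omega>\<in>space \<Omega>. max_share_frac N Mc P N0 (\<lambda>n1 n2 k. X n1 n2 k \<omega>) > \<delta>} \<subseteq> (\<Union>SE\<in>Pairs. W SE) \<union> Z"
  proof safe
    fix \<omega> assume \<omega>: "\<omega> \<in> space \<Omega>" and gt: "max_share_frac N Mc P N0 (\<lambda>n1 n2 k. X n1 n2 k \<omega>) > \<delta>"
      and "\<omega> \<notin> Z"
    then have nz: "\<forall>n1\<in>{1..N}. \<forall>n2\<in>{1..N}. \<forall>k\<in>{1..N}. X n1 n2 k \<omega> \<noteq> 0" by (auto simp: Z_def)
    obtain S E where "S \<subseteq> {1..N}" "E \<subseteq> {1..N}" "\<delta> * real N < real (card S)" "card S \<le> 2 * card E"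
      "\<And>n. n \<in> S \<Longrightarrow> below_threshold N Mc E (\<lambda>k\<in>{1..N}. X n n k \<omega>)"
      using max_share_frac_gt_imp_users_below_threshold[OF Mc P N0 nz \<delta> gt] by auto
    then have "(S, E) \<in> Pairs" and "\<omega> \<in> W (S, E)" using \<omega> by (auto simp: Pairs_def W_def)
    then show "\<omega> \<in> (\<Union>SE\<in>Pairs. W SE)" by blast
  qed
  moreover have "{\<omega>\<in>space \<Omega>. max_share_frac N Mc P N0 (\<lambda>n1 n2 k. X n1 n2 k \<omega>) > \<delta>} \<in> events"
    using channel_measurable by (rule max_share_frac_gt_measurable)
  moreover have UW_ev: "(\<Union>SE\<in>Pairs. W SE) \<in> events" using W_ev fin by auto
  ultimately have "prob {\<omega>\<in>space \<Omega>. max_share_frac N Mc P N0 (\<lambda>n1 n2 k. X n1 n2 k \<omega>) > \<delta>}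
      \<le> prob ((\<Union>SE\<in>Pairs. W SE) \<union> Z)"
    using channel_zero_null unfolding Z_def by (intro finite_measure_mono) auto
  also have "\<dots> = prob (\<Union>SE\<in>Pairs. W SE)"
    using UW_ev channel_zero_null unfolding Z_def by (rule measure_Un_null_set)
  also have "\<dots> \<le> (\<Sum>SE\<in>Pairs. prob (W SE))"
    using W_ev fin by (intro finite_measure_subadditive_finite) auto
  finally show ?thesis by (simp add: W_def case_prod_beta')
qed

lemma prob_max_share_frac_gt_le:
  assumes no_atoms: "\<And>n k x. n \<in> {1..N} \<Longrightarrow> k \<in> {1..N} \<Longrightarrow>
      prob {\<omega>\<in>space \<Omega>. cmod (X n n k \<omega>) = x} = 0"
    and P: "\<And>n. P n > 0" and N0: "N0 > 0" and \<delta>: "\<delta> > 0" and Mc: "1 \<le> Mc" "Mc \<le> N"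
    and p: "p = 2 * real (2*m+1) / real Mc + 4 * real (2*m+1) / (\<delta> * real Mc)" and p_le_1: "p \<le> 1"
  shows "prob {\<omega>\<in>space \<Omega>. max_share_frac N Mc P N0 (\<lambda>n1 n2 k. X n1 n2 k \<omega>) > \<delta>}
    \<le> (4 * p powr \<delta>) ^ N"
proof -
  define Pairs where
    "Pairs = {(S, E). S \<subseteq> {1..N} \<and> E \<subseteq> {1..N} \<and> \<delta> * real N < real (card S) \<and> card S \<le> 2 * card E}"
  have "prob {\<omega>\<in>space \<Omega>. max_share_frac N Mc P N0 (\<lambda>n1 n2 k. X n1 n2 k \<omega>) > \<delta>}
      \<le> (\<Sum>(S, E)\<in>Pairs. prob {\<omega>\<in>space \<Omega>. \<forall>n\<in>S. below_threshold N Mc E (\<lambda>k\<in>{1..N}. X n n k \<omega>)})"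
    unfolding Pairs_def using P N0 \<delta> Mc by (intro prob_max_share_frac_gt_le_sum) auto
  also have "\<dots> \<le> (\<Sum>(S, E)\<in>Pairs. p powr (\<delta> * real N))"
    using prob_users_below_threshold_le[OF no_atoms \<delta> Mc p p_le_1]
    by (intro sum_mono) (auto simp: Pairs_def)
  also have "\<dots> \<le> 4 ^ N * p powr (\<delta> * real N)"
    using subset_pairs_finite_card_le(2) by (simp add: Pairs_def mult_right_mono)
  also have "\<dots> = (4 * p powr \<delta>) ^ N"
  proof -
    have "p > 0" unfolding p using Mc \<delta> by (intro add_pos_pos divide_pos_pos) auto
    then have "p powr (\<delta> * real N) = (p powr \<delta>) ^ N"
      by (simp add: powr_powr powr_realpow[symmetric])
    then show ?thesis by (simp add: power_mult_distrib)
  qed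
  finally show ?thesis .
qed

end

section \<open>Convergence\<close>

lemma power_self_tendsto_zero:
  fixes q :: "nat \<Rightarrow> real"
  assumes "q \<longlonglongrightarrow> 0" and "\<And>n. q n \<ge> 0"
  shows "(\<lambda>n. q n ^ n) \<longlonglongrightarrow> 0"
proof (rule tendsto_sandwich[of "\<lambda>_. 0" _ _ "\<lambda>n. (1/2) ^ n"])
  have "eventually (\<lambda>n. q n < 1/2) sequentially" by (rule order_tendstoD(2)[OF assms(1)]) simp
  then show "eventually (\<lambda>n. q n ^ n \<le> (1/2) ^ n) sequentially"
    by eventually_elim (use assms(2) in \<open>auto intro: power_mono less_imp_le\<close>)
  show "(\<lambda>n. (1/2::real) ^ n) \<longlonglongrightarrow> 0" by (rule LIMSEQ_realpow_zero) auto
qed (use assms(2) in auto)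

lemma filterlim_at_top_if_ge_ln:
  fixes M :: "nat \<Rightarrow> nat"
  assumes c: "c > 0" and M: "\<And>N. c * ln (real N) \<le> real (M N)"
  shows "filterlim (\<lambda>N. real (M N)) at_top sequentially"
proof (rule filterlim_at_top_mono[OF _ always_eventually[OF allI[OF M]]])
  show "filterlim (\<lambda>N. c * ln (real N)) at_top sequentially"
    using c by (intro filterlim_tendsto_pos_mult_at_top[OF tendsto_const]
        filterlim_compose[OF ln_at_top filterlim_real_sequentially])
qed

lemma eventually_between_one_and_self:
  fixes M :: "nat \<Rightarrow> nat"
  assumes M_top: "filterlim (\<lambda>N. real (M N)) at_top sequentially"
    and M_sublin: "(\<lambda>N. real (M N) / real N) \<longlonglongrightarrow> 0"
  shows "eventually (\<lambda>N. 1 \<le> M N \<and> M N \<le> N) sequentially"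
proof (intro eventually_conj)
  show "eventually (\<lambda>N. 1 \<le> M N) sequentially"
    using filterlim_at_top_dense[THEN iffD1, OF M_top, rule_format, of 0]
    by (auto elim: eventually_mono)
  show "eventually (\<lambda>N. M N \<le> N) sequentially"
    using order_tendstoD(2)[OF M_sublin zero_less_one] eventually_gt_at_top[of 0]
    by eventually_elim (simp add: divide_less_eq)
qed

theorem mainTheorem5:
  fixes \<Omega> :: "nat \<Rightarrow> 'a measure"
    and X :: "nat \<Rightarrow> nat \<Rightarrow> nat \<Rightarrow> nat \<Rightarrow> 'a \<Rightarrow> complex"
    and m :: nat and \<epsilon> :: real and Mseq :: "nat \<Rightarrow> nat"
    and P :: "nat \<Rightarrow> real" and N0 :: real
  assumes prob: "\<And>N. prob_space (\<Omega> N)"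
    and chan: "\<And>N. m_dep_channel (\<Omega> N) N m (X N)"
    and cont: "\<And>N n k x. n \<in> {1..N} \<Longrightarrow> k \<in> {1..N} \<Longrightarrow>
                 measure (\<Omega> N) {\<omega>\<in>space (\<Omega> N). cmod (X N n n k \<omega>) = x} = 0"
    and P_pos: "\<And>n. P n > 0"
    and N0_pos: "N0 > 0"
    and eps: "\<epsilon> > 0"
    and M_lower: "\<And>N. real (Mseq N) \<ge> (exp 1 + \<epsilon>) * real (m + 1) * ln (real N)"
    and M_sublin: "(\<lambda>N. real (Mseq N) / real N) \<longlonglongrightarrow> 0"
  shows "(\<forall>N \<delta>. {\<omega>\<in>space (\<Omega> N). max_share_frac N (Mseq N) P N0 (\<lambda>n1 n2 k. X N n1 n2 k \<omega>) > \<delta>}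
              \<in> sets (\<Omega> N)) \<and>
         (\<forall>\<delta>>0. (\<lambda>N. measure (\<Omega> N)
            {\<omega>\<in>space (\<Omega> N). max_share_frac N (Mseq N) P N0 (\<lambda>n1 n2 k. X N n1 n2 k \<omega>) > \<delta>})
            \<longlonglongrightarrow> 0)"
proof (intro conjI allI impI)
  fix N \<delta>
  show "{\<omega>\<in>space (\<Omega> N). max_share_frac N (Mseq N) P N0 (\<lambda>n1 n2 k. X N n1 n2 k \<omega>) > \<delta>} \<in> sets (\<Omega> N)"
    using channel_measurable[OF prob chan] by (rule max_share_frac_gt_measurable)
next
  fix \<delta> :: real assume \<delta>: "\<delta> > 0"
  define p where
    "p N = 2 * real (2*m+1) / real (Mseq N) + 4 * real (2*m+1) / (\<delta> * real (Mseq N))" for N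
  have "0 < (exp 1 + \<epsilon>) * real (m + 1)" using eps by (intro mult_pos_pos add_pos_pos) auto
  then have M_top: "filterlim (\<lambda>N. real (Mseq N)) at_top sequentially"
    using M_lower by (rule filterlim_at_top_if_ge_ln)
  then have p_0: "p \<longlonglongrightarrow> 0"
    unfolding p_def by (intro tendsto_add_zero tendsto_divide_0[OF tendsto_const]
        filterlim_at_top_imp_at_infinity filterlim_tendsto_pos_mult_at_top[OF tendsto_const \<delta>]) auto
  have "eventually (\<lambda>N. 1 \<le> Mseq N \<and> Mseq N \<le> N \<and> p N \<le> 1) sequentially"
    using eventually_between_one_and_self[OF M_top M_sublin] order_tendstoD(2)[OF p_0 zero_less_one]
    by eventually_elim auto
  then have bound: "eventually (\<lambda>N. measure (\<Omega> N) {\<omega>\<in>space (\<Omega> N).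
      max_share_frac N (Mseq N) P N0 (\<lambda>n1 n2 k. X N n1 n2 k \<omega>) > \<delta>}
      \<le> (4 * p N powr \<delta>) ^ N) sequentially"
  proof eventually_elim
    case (elim N)
    then show ?case
      by (intro prob_max_share_frac_gt_le[OF prob chan cont P_pos N0_pos \<delta> _ _ p_def]) auto
  qed
  have lim: "(\<lambda>N. (4 * p N powr \<delta>) ^ N) \<longlonglongrightarrow> 0"
  proof -
    have "p N \<ge> 0" for N using \<delta> by (simp add: p_def)
    then show ?thesis
      using p_0 \<delta> by (intro power_self_tendsto_zero tendsto_mult_right_zero tendsto_zero_powrI) auto
  qed
  show "(\<lambda>N. measure (\<Omega> N) {\<omega>\<in>space (\<Omega> N).
      max_share_frac N (Mseq N) P N0 (\<lambda>n1 n2 k. X N n1 n2 k \<omega>) > \<delta>}) \<longlonglongrightarrow> 0"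
    by (rule tendsto_sandwich[OF _ bound tendsto_const lim]) simp
qed

end
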